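(* Consider MDVI$(\alpha,K,M)$ with any $\alpha\in[0,1)$ and positive integers $K,M$ on an MDP as in the context. Then, for every realization of the samples and every $k\in\{1,\dots,K\}$, $\|v_{k-1}\|_\infty\le H$.
   Context: MDP: finite state set $\mathcal{X}$, finite action set $\mathcal{A}$, discount $\gamma\in[0,1)$, reward $r\in[-1,1]^{\mathcal{X}\times\mathcal{A}}$, transition kernel $P(y|x,a)$, $H=1/(1-\gamma)$. MDVI$(\alpha,K,M)$: $s_0 = 0$, $w_0=w_{-1}=0$; for $k=0,\dots,K-1$: $v_k = w_k-\alpha w_{k-1}$; for each $(x,a)$, independent samples $y_{k,m,x,a}\sim P(\cdot|x,a)$, $m\in[M]$; $q_{k+1}(x,a) = r(x,a)+\frac{\gamma}{M}\sum_m v_k(y_{k,m,x,a})$; $s_{k+1}=q_{k+1}+\alpha s_k$; $w_{k+1}(x)=\max_a s_{k+1}(x,a)$. *)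

theory Defs
  imports Complex_Main
begin

text \<open>Reward r x a, samples y k m x a (the m-th next-state sample, m < M, drawn at
  iteration k for the pair (x,a)). The recursion state at step k is the pair
  (s_k, w_{k-1}).\<close>

primrec mdvi_st ::
  "real \<Rightarrow> real \<Rightarrow> nat \<Rightarrow> ('x \<Rightarrow> 'a::finite \<Rightarrow> real)
   \<Rightarrow> (nat \<Rightarrow> nat \<Rightarrow> 'x \<Rightarrow> 'a \<Rightarrow> 'x) \<Rightarrow> nat
   \<Rightarrow> ('x \<Rightarrow> 'a \<Rightarrow> real) \<times> ('x \<Rightarrow> real)" where
  "mdvi_st \<gamma> \<alpha> M r y 0 = ((\<lambda>x a. 0), (\<lambda>x. 0))"
| "mdvi_st \<gamma> \<alpha> M r y (Suc k) =
     (let sk = fst (mdvi_st \<gamma> \<alpha> M r y k);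
          wprev = snd (mdvi_st \<gamma> \<alpha> M r y k);
          wk = (\<lambda>x. Max (range (sk x)));
          vk = (\<lambda>x. wk x - \<alpha> * wprev x)
      in ((\<lambda>x a. r x a + \<gamma> / real M * (\<Sum>m<M. vk (y k m x a)) + \<alpha> * sk x a), wk))"

definition mdvi_s where
  "mdvi_s \<gamma> \<alpha> M r y k = fst (mdvi_st \<gamma> \<alpha> M r y k)"

definition mdvi_w where
  "mdvi_w \<gamma> \<alpha> M r y k x = Max (range (mdvi_s \<gamma> \<alpha> M r y k x))"

definition mdvi_v where
  "mdvi_v \<gamma> \<alpha> M r y k x =
     mdvi_w \<gamma> \<alpha> M r y k x - \<alpha> * snd (mdvi_st \<gamma> \<alpha> M r y k) x"

definition sup_norm :: "('x::finite \<Rightarrow> real) \<Rightarrow> real" where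
  "sup_norm f = Max (range (\<lambda>x. \<bar>f x\<bar>))"

end

theory Submission
  imports Defs
begin

text \<open>Write s(k+1) = q(k+1) + \<alpha> s(k). Then v(k+1) = max_a (q(k+1) + \<alpha> s(k)) - max_a (\<alpha> s(k)),
  and adding q(k+1) to the argument of a maximum moves it by at most the sup norm of q(k+1).
  As q(k+1) is a reward bounded by 1 plus \<gamma> times an empirical mean of v(k), the bound
  H on the sup norm of v(k) propagates by induction, because 1 + \<gamma> H = H.\<close>

lemma abs_Max_add_diff_le:
  fixes q s :: "'a \<Rightarrow> 'b::{linorder, ordered_ab_group_add_abs}"
  assumes "finite A" "A \<noteq> {}" "\<And>a. a \<in> A \<Longrightarrow> \<bar>q a\<bar> \<le> B"
  shows "\<bar>Max ((\<lambda>a. q a + s a) ` A) - Max (s ` A)\<bar> \<le> B"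
proof -
  have "Max ((\<lambda>a. q a + s a) ` A) \<in> (\<lambda>a. q a + s a) ` A" "Max (s ` A) \<in> s ` A"
    using assms(1,2) by (simp_all add: Max_in)
  then obtain a1 a2 where a1: "a1 \<in> A" "Max ((\<lambda>a. q a + s a) ` A) = q a1 + s a1"
    and a2: "a2 \<in> A" "Max (s ` A) = s a2"
    by blast
  have "s a1 \<le> Max (s ` A)" "q a2 + s a2 \<le> Max ((\<lambda>a. q a + s a) ` A)"
    using a1(1) a2(1) assms(1) by simp_all
  then have "Max ((\<lambda>a. q a + s a) ` A) - Max (s ` A) \<le> q a1"
    and "q a2 \<le> Max ((\<lambda>a. q a + s a) ` A) - Max (s ` A)"
    using a1(2) a2(2) by (simp_all add: diff_le_eq le_diff_eq add_left_mono)
  moreover have "q a1 \<le> B" "- B \<le> q a2"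
    using a1(1) a2(1) assms(3) abs_le_iff minus_le_iff by blast+
  ultimately have "Max ((\<lambda>a. q a + s a) ` A) - Max (s ` A) \<le> B"
    and "- B \<le> Max ((\<lambda>a. q a + s a) ` A) - Max (s ` A)"
    by (meson order_trans)+
  then show ?thesis
    using abs_leI minus_le_iff by blast
qed

lemma Max_image_mult_left:
  fixes f :: "'a \<Rightarrow> 'b::linordered_semiring"
  assumes "0 \<le> c" "finite A" "A \<noteq> {}"
  shows "Max ((\<lambda>a. c * f a) ` A) = c * Max (f ` A)"
proof -
  have "mono ((*) c)"
    using assms(1) by (simp add: monoI mult_left_mono)
  then show ?thesis
    using assms(2,3) by (simp add: mono_Max_commute image_image)
qed

lemma abs_scaled_mean_le:
  fixes f :: "nat \<Rightarrow> real"
  assumes "0 \<le> \<gamma>" "0 < M" "\<And>m. m < M \<Longrightarrow> \<bar>f m\<bar> \<le> B"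
  shows "\<bar>\<gamma> / real M * (\<Sum>m<M. f m)\<bar> \<le> \<gamma> * B"
proof -
  have "\<bar>\<Sum>m<M. f m\<bar> \<le> (\<Sum>m<M. \<bar>f m\<bar>)"
    by (rule sum_abs)
  also have "\<dots> \<le> real M * B"
    using sum_bounded_above[of "{..<M}" "\<lambda>m. \<bar>f m\<bar>" B] assms(3) by simp
  finally have "\<gamma> / real M * \<bar>\<Sum>m<M. f m\<bar> \<le> \<gamma> / real M * (real M * B)"
    using assms(1) by (intro mult_left_mono) simp_all
  then show ?thesis
    using assms(1,2) by (simp add: abs_mult)
qed

lemma sup_norm_le:
  fixes f :: "'x::finite \<Rightarrow> real"
  assumes "\<And>x. \<bar>f x\<bar> \<le> B"
  shows "sup_norm f \<le> B"
  unfolding sup_norm_def using assms by (intro Max.boundedI) auto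

lemma mdvi_v_0: "mdvi_v \<gamma> \<alpha> M r y 0 x = 0"
  by (simp add: mdvi_v_def mdvi_w_def mdvi_s_def)

lemma mdvi_s_Suc:
  "mdvi_s \<gamma> \<alpha> M r y (Suc k) x a =
     r x a + \<gamma> / real M * (\<Sum>m<M. mdvi_v \<gamma> \<alpha> M r y k (y k m x a)) + \<alpha> * mdvi_s \<gamma> \<alpha> M r y k x a"
  by (simp add: mdvi_s_def mdvi_v_def mdvi_w_def Let_def)

lemma mdvi_v_Suc:
  "mdvi_v \<gamma> \<alpha> M r y (Suc k) x = mdvi_w \<gamma> \<alpha> M r y (Suc k) x - \<alpha> * mdvi_w \<gamma> \<alpha> M r y k x"
  by (simp add: mdvi_v_def mdvi_w_def mdvi_s_def Let_def)

lemma abs_mdvi_v_le: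
  fixes r :: "'x \<Rightarrow> 'a::finite \<Rightarrow> real"
  assumes "0 \<le> \<gamma>" "\<gamma> < 1" "\<And>x a. \<bar>r x a\<bar> \<le> 1" "0 \<le> \<alpha>" "0 < M"
  shows "\<bar>mdvi_v \<gamma> \<alpha> M r y k x\<bar> \<le> 1 / (1 - \<gamma>)"
proof (induction k arbitrary: x)
  case 0
  then show ?case
    using assms(2) by (simp add: mdvi_v_0)
next
  case (Suc k)
  define H where "H = 1 / (1 - \<gamma>)"
  define s where "s = mdvi_s \<gamma> \<alpha> M r y k x"
  define q where "q a = r x a + \<gamma> / real M * (\<Sum>m<M. mdvi_v \<gamma> \<alpha> M r y k (y k m x a))" for a
  have "\<bar>q a\<bar> \<le> 1 + \<gamma> * H" for a
  proof -
    have "\<bar>\<gamma> / real M * (\<Sum>m<M. mdvi_v \<gamma> \<alpha> M r y k (y k m x a))\<bar> \<le> \<gamma> * H"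
      using Suc.IH assms(1,5) unfolding H_def by (intro abs_scaled_mean_le)
    then show ?thesis
      using assms(3)[of x a] unfolding q_def by linarith
  qed
  moreover have "1 + \<gamma> * H = H"
    using assms(2) unfolding H_def by (simp add: field_simps)
  moreover have "mdvi_v \<gamma> \<alpha> M r y (Suc k) x =
      Max (range (\<lambda>a. q a + \<alpha> * s a)) - Max (range (\<lambda>a. \<alpha> * s a))"
    using assms(4) by (simp add: mdvi_v_Suc mdvi_w_def mdvi_s_Suc q_def s_def Max_image_mult_left)
  ultimately show ?case
    unfolding H_def[symmetric] by (simp add: abs_Max_add_diff_le)
qed

theorem lemma24:
  fixes P :: "'x::finite \<Rightarrow> 'x \<Rightarrow> 'a::finite \<Rightarrow> real"
    and r :: "'x \<Rightarrow> 'a \<Rightarrow> real"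
    and y :: "nat \<Rightarrow> nat \<Rightarrow> 'x \<Rightarrow> 'a \<Rightarrow> 'x"
    and \<gamma> \<alpha> :: real and K M k :: nat
  assumes "0 \<le> \<gamma>" "\<gamma> < 1"
    and "\<And>x a. \<bar>r x a\<bar> \<le> 1"
    and "\<And>z x a. 0 \<le> P z x a" "\<And>x a. (\<Sum>z\<in>UNIV. P z x a) = 1"
    and "0 \<le> \<alpha>" "\<alpha> < 1" "0 < K" "0 < M"
    and "\<And>j m x a. 0 < P (y j m x a) x a"
    and "1 \<le> k" "k \<le> K"
  shows "sup_norm (mdvi_v \<gamma> \<alpha> M r y (k - 1)) \<le> 1 / (1 - \<gamma>)"
  using abs_mdvi_v_le[OF assms(1-3,6,9)] by (rule sup_norm_le)

end
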